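(* Every palindromic composition $\beta$ is $\mathcal{L}$-unique; that is, if $\alpha$ is a composition with $\mathcal{L}(\alpha,\mathbf{x})=\mathcal{L}(\beta,\mathbf{x})$, then $\alpha=\beta$.
   Context: A composition is a finite nonempty sequence $\beta=\beta_1\cdots\beta_k$ of positive integers; it is a palindrome if $\beta_k\cdots\beta_1=\beta$. The type $\lambda(\alpha)$ of a composition is the partition obtained by sorting its parts in weakly decreasing order; for a partition $\lambda=\lambda_1\cdots\lambda_l$, $\mathbf{x}_\lambda=x_{\lambda_1}\cdots x_{\lambda_l}$ in commuting indeterminates $x_1,x_2,\ldots$. A composition $\alpha$ is a coarsening of $\beta$, $\alpha\succeq\beta$, if $\alpha$ arises from $\beta$ by summing blocks of consecutive parts. The $\mathcal{L}$-polynomial is $\mathcal{L}(\beta,\mathbf{x})=\sum_{\alpha\succeq\beta}\mathbf{x}_{\lambda(\alpha)}$. A composition $\beta$ is $\mathcal{L}$-unique if the set of compositions with the same $\mathcal{L}$-polynomial as $\beta$ equals $\{\beta,\text{reverse of }\beta\}$. *)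

theory Defs
  imports Main "HOL-Library.Multiset"
begin

definition composition :: "nat list \<Rightarrow> bool" where
  "composition \<beta> \<longleftrightarrow> \<beta> \<noteq> [] \<and> (\<forall>b\<in>set \<beta>. 0 < b)"

definition palindrome :: "nat list \<Rightarrow> bool" where
  "palindrome \<beta> \<longleftrightarrow> rev \<beta> = \<beta>"

definition coarsening :: "nat list \<Rightarrow> nat list \<Rightarrow> bool" where
  "coarsening \<alpha> \<beta> \<longleftrightarrow>
     (\<exists>bs. concat bs = \<beta> \<and> (\<forall>b\<in>set bs. b \<noteq> []) \<and> \<alpha> = map sum_list bs)"

text \<open>A monomial x_lambda = x_{lambda_1} ... x_{lambda_l} is
  represented by the multiset of its indices (= the partition lambda, i.e. the type
  mset alpha of alpha); a polynomial with coefficients in nat is represented by the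
  multiset of its monomials (coefficient = multiplicity).\<close>
definition Lpoly :: "nat list \<Rightarrow> nat multiset multiset" where
  "Lpoly \<beta> = image_mset mset (mset_set {\<alpha>. coarsening \<alpha> \<beta>})"

definition L_unique :: "nat list \<Rightarrow> bool" where
  "L_unique \<beta> \<longleftrightarrow> {\<alpha>. composition \<alpha> \<and> Lpoly \<alpha> = Lpoly \<beta>} = {\<beta>, rev \<beta>}"

end

theory Submission
  imports Defs
begin

text \<open>A composition \<open>g\<close> of \<open>n\<close> is determined by \<open>n\<close> and the set of its proper partial
  sums. The two-part coarsenings of \<open>g\<close> are exactly the cuts at those partial sums, so the
  coefficient of \<open>x\<^sub>s x\<^sub>t\<close> (with \<open>s + t = n\<close>) in \<open>\<L>(g, x)\<close> counts how many of \<open>s\<close>, \<open>t\<close>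
  are partial sums of \<open>g\<close>. For a palindrome \<open>\<beta>\<close> the partial sums are closed under
  \<open>s \<mapsto> n - s\<close>, so this count is \<open>0\<close> or \<open>2\<close> for every pair, which forces a composition
  \<open>\<alpha>\<close> with the same \<open>\<L>\<close>-polynomial to have exactly the partial sums of \<open>\<beta>\<close>.\<close>

definition partial_sums :: "nat list \<Rightarrow> nat set" where
  "partial_sums g = {sum_list (take i g) | i. 0 < i \<and> i < length g}"

lemma sum_list_take_add_drop: "sum_list (take i xs) + sum_list (drop i xs) = sum_list xs"
  by (metis append_take_drop_id sum_list_append)

lemma partial_sums_singleton [simp]: "partial_sums [a] = {}"
  by (auto simp: partial_sums_def)

lemma partial_sums_Cons_Cons:
  "partial_sums (a # y # xs) = insert a ((+) a ` partial_sums (y # xs))"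
proof (rule set_eqI)
  fix x
  show "x \<in> partial_sums (a # y # xs) \<longleftrightarrow> x \<in> insert a ((+) a ` partial_sums (y # xs))"
  proof
    assume "x \<in> partial_sums (a # y # xs)"
    then obtain i where i: "0 < i" "i < length (a # y # xs)" "x = sum_list (take i (a # y # xs))"
      by (auto simp: partial_sums_def)
    then obtain j where j: "i = Suc j" by (cases i) auto
    show "x \<in> insert a ((+) a ` partial_sums (y # xs))"
    proof (cases j)
      case 0
      then show ?thesis using i j by simp
    next
      case (Suc k)
      have "sum_list (take j (y # xs)) \<in> partial_sums (y # xs)"
        unfolding partial_sums_def using i j Suc by (intro CollectI exI[of _ j]) auto
      then show ?thesis using i j by auto
    qed
  next
    assume "x \<in> insert a ((+) a ` partial_sums (y # xs))"
    then consider "x = a" | j where "0 < j" "j < length (y # xs)" "x = a + sum_list (take j (y # xs))"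
      by (auto simp: partial_sums_def)
    then show "x \<in> partial_sums (a # y # xs)"
    proof cases
      case 1
      then show ?thesis unfolding partial_sums_def by (intro CollectI exI[of _ 1]) auto
    next
      case (2 j)
      then show ?thesis unfolding partial_sums_def by (intro CollectI exI[of _ "Suc j"]) auto
    qed
  qed
qed

lemma partial_sums_pos: "\<forall>b\<in>set g. 0 < b \<Longrightarrow> x \<in> partial_sums g \<Longrightarrow> 0 < x"
  by (cases g) (auto simp: partial_sums_def gr0_conv_Suc)

lemma partial_sums_le_sum_list: "x \<in> partial_sums g \<Longrightarrow> x \<le> sum_list g"
  by (auto simp: partial_sums_def) (metis le_add1 sum_list_take_add_drop)

lemma partial_sums_inject:
  assumes "\<forall>x\<in>set a. 0 < x" "\<forall>x\<in>set b. 0 < x" "a \<noteq> []" "b \<noteq> []"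
    and "sum_list a = sum_list b" "partial_sums a = partial_sums b"
  shows "a = b"
  using assms
proof (induction a arbitrary: b)
  case Nil
  then show ?case by simp
next
  case (Cons x a')
  obtain z b' where b: "b = z # b'" using Cons.prems by (cases b) auto
  show ?case
  proof (cases "a' = [] \<or> b' = []")
    case True
    then have "a' = [] \<and> b' = []"
      using Cons.prems(6) b by (cases a'; cases b') (auto simp: partial_sums_Cons_Cons)
    then show ?thesis using Cons.prems(5) b by simp
  next
    case False
    have pa: "\<forall>p\<in>partial_sums a'. 0 < p" and pb: "\<forall>p\<in>partial_sums b'. 0 < p"
      using partial_sums_pos Cons.prems(1,2) b by auto
    obtain y ys w ws where "a' = y # ys" "b' = w # ws" using False by (auto simp: neq_Nil_conv)
    then have eq: "insert x ((+) x ` partial_sums a') = insert z ((+) z ` partial_sums b')"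
      using Cons.prems(6) b by (simp add: partial_sums_Cons_Cons)
    \<comment> \<open>\<open>x\<close> and \<open>z\<close> are both the least element of the common set.\<close>
    have "x = z"
    proof (rule ccontr)
      assume "x \<noteq> z"
      with eq have "x \<in> (+) z ` partial_sums b'" "z \<in> (+) x ` partial_sums a'"
        by (metis insertE insertI1)+
      with pa pb show False by fastforce
    qed
    have "x \<notin> (+) x ` partial_sums a'" "x \<notin> (+) x ` partial_sums b'" using pa pb by auto
    from insert_ident[OF this] eq \<open>x = z\<close>
    have "(+) x ` partial_sums a' = (+) x ` partial_sums b'" by simp
    then have "partial_sums a' = partial_sums b'" by (simp add: inj_image_eq_iff)
    moreover have "sum_list a' = sum_list b'" using Cons.prems(5) b \<open>x = z\<close> by simp
    ultimately have "a' = b'" using Cons.IH Cons.prems(1,2) False b by simp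
    then show ?thesis using b \<open>x = z\<close> by simp
  qed
qed

lemma partial_sums_palindrome:
  assumes "rev g = g" "s \<in> partial_sums g" "s + t = sum_list g"
  shows "t \<in> partial_sums g"
proof -
  obtain i where i: "0 < i" "i < length g" "s = sum_list (take i g)"
    using assms(2) by (auto simp: partial_sums_def)
  have "t = sum_list (drop i g)" using i(3) assms(3) sum_list_take_add_drop[of i g] by simp
  also have "\<dots> = sum_list (rev (drop i g))" by simp
  also have "\<dots> = sum_list (take (length g - i) g)" using assms(1) by (metis rev_drop)
  finally show ?thesis unfolding partial_sums_def using i by auto
qed

lemma sum_list_concat: "sum_list (concat xss) = sum_list (map sum_list (xss :: 'a::monoid_add list list))"
  by (induction xss) auto

lemma coarsening_sum_list: "coarsening a g \<Longrightarrow> sum_list a = sum_list g"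
  by (auto simp: coarsening_def sum_list_concat)

lemma length_le_length_concat: "\<forall>xs\<in>set xss. xs \<noteq> [] \<Longrightarrow> length xss \<le> length (concat xss)"
proof (induction xss)
  case (Cons xs xss)
  then show ?case by (cases xs) auto
qed simp

lemma coarsening_length_le: "coarsening a g \<Longrightarrow> length a \<le> length g"
  by (auto simp: coarsening_def intro: length_le_length_concat)

lemma finite_coarsenings: "finite {a. coarsening a g}"
proof (rule finite_subset)
  show "{a. coarsening a g} \<subseteq> {xs. set xs \<subseteq> {0..sum_list g} \<and> length xs \<le> length g}"
    using coarsening_length_le coarsening_sum_list member_le_sum_list
    by (metis (lifting) atLeastAtMost_iff mem_Collect_eq subsetI zero_le)
qed (intro finite_lists_length_le, simp)

lemma coarsening_pair_iff:
  "coarsening [s, t] g \<longleftrightarrow> s \<in> partial_sums g \<and> s + t = sum_list g"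
proof
  assume "coarsening [s, t] g"
  then obtain b1 b2 where "g = b1 @ b2" "b1 \<noteq> []" "b2 \<noteq> []" "s = sum_list b1" "t = sum_list b2"
    by (auto simp: coarsening_def)
  then show "s \<in> partial_sums g \<and> s + t = sum_list g"
    unfolding partial_sums_def by (auto intro!: exI[of _ "length b1"])
next
  assume "s \<in> partial_sums g \<and> s + t = sum_list g"
  then obtain i where i: "0 < i" "i < length g" "s = sum_list (take i g)" "s + t = sum_list g"
    by (auto simp: partial_sums_def)
  then have "t = sum_list (drop i g)" using sum_list_take_add_drop[of i g] by simp
  then show "coarsening [s, t] g" unfolding coarsening_def using i
    by (intro exI[of _ "[take i g, drop i g]"]) auto
qed

lemma count_image_mset_mset_set:
  "finite A \<Longrightarrow> count (image_mset f (mset_set A)) x = card {a\<in>A. f a = x}"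
  by (simp add: count_image_mset' conj_commute eq_commute)

lemma mset_eq_pair: "mset a = {#s, t#} \<Longrightarrow> a = [s, t] \<or> a = [t, s]"
proof -
  assume a: "mset a = {#s, t#}"
  have "length a = 2" using arg_cong[OF a, of size] by simp
  then obtain u v where "a = [u, v]" by (auto simp: numeral_2_eq_2 length_Suc_conv)
  then show ?thesis using a by (auto simp: add_eq_conv_diff)
qed

lemma count_Lpoly_pair:
  assumes "s + t = sum_list g"
  shows "count (Lpoly g) {#s, t#} = card (partial_sums g \<inter> {s, t})"
proof -
  have "count (Lpoly g) {#s, t#} = card {a\<in>{a. coarsening a g}. mset a = {#s, t#}}"
    unfolding Lpoly_def using finite_coarsenings by (rule count_image_mset_mset_set)
  also have "{a\<in>{a. coarsening a g}. mset a = {#s, t#}} = {a\<in>{[s, t], [t, s]}. coarsening a g}"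
    by (auto simp: add_mset_commute dest: mset_eq_pair)
  also have "\<dots> = (\<lambda>u. [u, sum_list g - u]) ` (partial_sums g \<inter> {s, t})"
    using assms by (auto simp: coarsening_pair_iff)
  also have "card \<dots> = card (partial_sums g \<inter> {s, t})"
    by (rule card_image) (auto simp: inj_on_def)
  finally show ?thesis .
qed

lemma Lpoly_eq_imp_sum_list_eq:
  assumes "g \<noteq> []" "Lpoly a = Lpoly g"
  shows "sum_list a = sum_list g"
proof -
  have "coarsening [sum_list g] g"
    unfolding coarsening_def using assms(1) by (intro exI[of _ "[g]"]) auto
  then have "{#sum_list g#} \<in># Lpoly g"
    unfolding Lpoly_def using finite_coarsenings by force
  then have "{#sum_list g#} \<in># Lpoly a" using assms(2) by simp
  then obtain c where c: "coarsening c a" "mset c = {#sum_list g#}"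
    unfolding Lpoly_def using finite_coarsenings by auto
  then have "c = [sum_list g]" by (cases c) auto
  with coarsening_sum_list[OF c(1)] show ?thesis by simp
qed

lemma Lpoly_eq_imp_partial_sums_eq:
  assumes Lpoly: "Lpoly a = Lpoly b" and sum: "sum_list a = sum_list b"
    and sym: "\<And>s t. s \<in> partial_sums b \<Longrightarrow> s + t = sum_list b \<Longrightarrow> t \<in> partial_sums b"
  shows "partial_sums a = partial_sums b"
proof (intro set_eqI)
  fix s
  define t where "t = sum_list b - s"
  let ?A = "partial_sums a \<inter> {s, t}" and ?B = "partial_sums b \<inter> {s, t}"
  show "s \<in> partial_sums a \<longleftrightarrow> s \<in> partial_sums b"
  proof (cases "s \<le> sum_list b")
    case True
    then have st: "s + t = sum_list b" by (simp add: t_def)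
    have card: "card ?A = card ?B"
      using count_Lpoly_pair[of s t a] count_Lpoly_pair[of s t b] st sum Lpoly by simp
    have "?B = {} \<or> ?B = {s, t}" using sym st by (auto simp: add.commute)
    then have "?A = ?B"
    proof
      assume "?B = {}"
      then show "?A = ?B" using card by simp
    next
      assume B: "?B = {s, t}"
      then have "?A = {s, t}" using card by (intro card_subset_eq) auto
      with B show "?A = ?B" by simp
    qed
    then show ?thesis by blast
  next
    case False
    then show ?thesis using partial_sums_le_sum_list sum by fastforce
  qed
qed

lemma Lpoly_eq_palindrome_imp_eq:
  assumes "composition a" "composition b" "palindrome b" "Lpoly a = Lpoly b"
  shows "a = b"
proof -
  have sum: "sum_list a = sum_list b"
    using assms Lpoly_eq_imp_sum_list_eq by (simp add: composition_def)
  moreover have "partial_sums a = partial_sums b"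
    using assms(3,4) sum partial_sums_palindrome
    by (intro Lpoly_eq_imp_partial_sums_eq) (auto simp: palindrome_def)
  ultimately show ?thesis
    using assms(1,2) partial_sums_inject by (simp add: composition_def)
qed

theorem proposition3p6:
  fixes \<beta> :: "nat list"
  assumes "composition \<beta>" and "palindrome \<beta>"
  shows "L_unique \<beta> \<and> (\<forall>\<alpha>. composition \<alpha> \<and> Lpoly \<alpha> = Lpoly \<beta> \<longrightarrow> \<alpha> = \<beta>)"
proof -
  have unique: "\<forall>\<alpha>. composition \<alpha> \<and> Lpoly \<alpha> = Lpoly \<beta> \<longrightarrow> \<alpha> = \<beta>"
    using Lpoly_eq_palindrome_imp_eq assms by blast
  moreover have "rev \<beta> = \<beta>" using assms(2) by (simp add: palindrome_def)
  ultimately have "L_unique \<beta>" unfolding L_unique_def using assms(1) by auto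
  with unique show ?thesis by blast
qed

end
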